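(* Let $(E,\mathscr{T},\le)$ be a topological preordered space and let $c_1:E\to c_1E$ and $c_2:E\to c_2E$ be two preorder compactifications of $E$ whose compact spaces $c_1E$, $c_2E$ are Hausdorff. If $c_1$ and $c_2$ are equivalent, then there is a preorder homeomorphism $H:c_2E\to c_1E$ such that $H\circ c_2=c_1$.
   Context: A topological preordered space is a triple $(E,\mathscr{T},\le)$ with $(E,\mathscr{T})$ a topological space and $\le$ a reflexive transitive relation on $E$. A map $f$ between preordered sets is isotone if $x\le y\Rightarrow f(x)\le f(y)$. A preorder homeomorphism between topological preordered spaces is a bijection which is continuous and isotone and whose inverse is continuous and isotone; a preorder embedding is a map that is a preorder homeomorphism onto its image endowed with the induced topology and induced preorder. A preorder compactification of $E$ is a preorder embedding $c:E\to cE$ into a compact topological preordered space $(cE,\mathscr{T}_c,\le_c)$ such that $c(E)$ is dense in $cE$. For two preorder compactifications, $c_1\le c_2$ ("$c_2$ dominates $c_1$") means there is a continuous isotone map $C:c_2E\to c_1E$ with $C\circ c_2=c_1$; $c_1,c_2$ are equivalent if $c_1\le c_2$ and $c_2\le c_1$. *)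

theory Defs
  imports "HOL-Analysis.Analysis"
begin

definition top_preordered_space :: "'a topology \<Rightarrow> ('a \<Rightarrow> 'a \<Rightarrow> bool) \<Rightarrow> bool" where
  "top_preordered_space X le \<longleftrightarrow>
     (\<forall>x\<in>topspace X. le x x) \<and>
     (\<forall>x\<in>topspace X. \<forall>y\<in>topspace X. \<forall>z\<in>topspace X. le x y \<longrightarrow> le y z \<longrightarrow> le x z)"

definition isotone_on :: "'a set \<Rightarrow> ('a \<Rightarrow> 'a \<Rightarrow> bool) \<Rightarrow> ('b \<Rightarrow> 'b \<Rightarrow> bool) \<Rightarrow> ('a \<Rightarrow> 'b) \<Rightarrow> bool" where
  "isotone_on S le le' f \<longleftrightarrow> (\<forall>x\<in>S. \<forall>y\<in>S. le x y \<longrightarrow> le' (f x) (f y))"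

definition preorder_homeomorphism ::
  "'a topology \<Rightarrow> ('a \<Rightarrow> 'a \<Rightarrow> bool) \<Rightarrow> 'b topology \<Rightarrow> ('b \<Rightarrow> 'b \<Rightarrow> bool) \<Rightarrow> ('a \<Rightarrow> 'b) \<Rightarrow> bool" where
  "preorder_homeomorphism X le Y le' f \<longleftrightarrow>
     (\<exists>g. homeomorphic_maps X Y f g \<and>
          isotone_on (topspace X) le le' f \<and> isotone_on (topspace Y) le' le g)"

definition preorder_embedding ::
  "'a topology \<Rightarrow> ('a \<Rightarrow> 'a \<Rightarrow> bool) \<Rightarrow> 'b topology \<Rightarrow> ('b \<Rightarrow> 'b \<Rightarrow> bool) \<Rightarrow> ('a \<Rightarrow> 'b) \<Rightarrow> bool" where
  "preorder_embedding X le Y le' f \<longleftrightarrow>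
     f ` topspace X \<subseteq> topspace Y \<and>
     preorder_homeomorphism X le (subtopology Y (f ` topspace X)) le' f"

definition preorder_compactification ::
  "'a topology \<Rightarrow> ('a \<Rightarrow> 'a \<Rightarrow> bool) \<Rightarrow> 'b topology \<Rightarrow> ('b \<Rightarrow> 'b \<Rightarrow> bool) \<Rightarrow> ('a \<Rightarrow> 'b) \<Rightarrow> bool" where
  "preorder_compactification E le cE lec c \<longleftrightarrow>
     top_preordered_space cE lec \<and> compact_space cE \<and>
     preorder_embedding E le cE lec c \<and>
     cE closure_of (c ` topspace E) = topspace cE"

text \<open>c1 \<le> c2 (c2 dominates c1): there is a continuous isotone C : c2E \<rightarrow> c1E
with C \<circ> c2 = c1 (on E).\<close>
definition compactification_le ::
  "'a topology \<Rightarrow> 'b topology \<Rightarrow> ('b \<Rightarrow> 'b \<Rightarrow> bool) \<Rightarrow> ('a \<Rightarrow> 'b) \<Rightarrow>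
   'c topology \<Rightarrow> ('c \<Rightarrow> 'c \<Rightarrow> bool) \<Rightarrow> ('a \<Rightarrow> 'c) \<Rightarrow> bool" where
  "compactification_le E X1 le1 c1 X2 le2 c2 \<longleftrightarrow>
     (\<exists>C. continuous_map X2 X1 C \<and> isotone_on (topspace X2) le2 le1 C \<and>
          (\<forall>x\<in>topspace E. C (c2 x) = c1 x))"

end

theory Submission
  imports Defs
begin

text \<open>The two dominating maps \<open>C : c\<^sub>2E \<rightarrow> c\<^sub>1E\<close> and \<open>D : c\<^sub>1E \<rightarrow> c\<^sub>2E\<close> compose
to maps that fix the dense image of \<open>E\<close>; since continuous maps into a Hausdorff
space that agree on a dense set agree everywhere, \<open>C\<close> and \<open>D\<close> are mutually inverse.\<close>

lemma continuous_map_left_inverse_from_dense: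
  assumes "continuous_map X Y f" and "continuous_map Y X g" and "Hausdorff_space X"
    and "X closure_of S = topspace X" and "\<And>x. x \<in> S \<Longrightarrow> g (f x) = x"
    and "x \<in> topspace X"
  shows "g (f x) = x"
proof -
  have "(g \<circ> f) x = id x"
    by (rule forall_in_closure_of_eq [of x X S X])
      (use assms continuous_map_compose [OF assms(1,2)] in \<open>auto simp: o_def\<close>)
  then show ?thesis
    by simp
qed

theorem mainTheorem1:
  fixes E :: "'a topology" and le :: "'a \<Rightarrow> 'a \<Rightarrow> bool"
    and X1 :: "'b topology" and le1 :: "'b \<Rightarrow> 'b \<Rightarrow> bool" and c1 :: "'a \<Rightarrow> 'b"
    and X2 :: "'c topology" and le2 :: "'c \<Rightarrow> 'c \<Rightarrow> bool" and c2 :: "'a \<Rightarrow> 'c"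
  assumes "top_preordered_space E le"
    and "preorder_compactification E le X1 le1 c1" and "Hausdorff_space X1"
    and "preorder_compactification E le X2 le2 c2" and "Hausdorff_space X2"
    and "compactification_le E X1 le1 c1 X2 le2 c2"
    and "compactification_le E X2 le2 c2 X1 le1 c1"
  shows "\<exists>H. preorder_homeomorphism X2 le2 X1 le1 H \<and> (\<forall>x\<in>topspace E. H (c2 x) = c1 x)"
proof -
  obtain C where C: "continuous_map X2 X1 C" "isotone_on (topspace X2) le2 le1 C"
    and C_c2: "\<forall>x\<in>topspace E. C (c2 x) = c1 x"
    using assms(6) unfolding compactification_le_def by blast
  obtain D where D: "continuous_map X1 X2 D" "isotone_on (topspace X1) le1 le2 D"
    and D_c1: "\<forall>x\<in>topspace E. D (c1 x) = c2 x"
    using assms(7) unfolding compactification_le_def by blast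
  have dense1: "X1 closure_of (c1 ` topspace E) = topspace X1"
    and dense2: "X2 closure_of (c2 ` topspace E) = topspace X2"
    using assms(2,4) unfolding preorder_compactification_def by blast+
  have "D (C y) = y" if "y \<in> topspace X2" for y
    by (rule continuous_map_left_inverse_from_dense [OF C(1) D(1) assms(5) dense2])
      (use C_c2 D_c1 that in auto)
  moreover have "C (D y) = y" if "y \<in> topspace X1" for y
    by (rule continuous_map_left_inverse_from_dense [OF D(1) C(1) assms(3) dense1])
      (use C_c2 D_c1 that in auto)
  ultimately have "homeomorphic_maps X2 X1 C D"
    unfolding homeomorphic_maps_def using C(1) D(1) by blast
  then show ?thesis
    unfolding preorder_homeomorphism_def using C D C_c2 by blast
qed

end
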